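(* Let $q\in\mathbb{K}$ be a primitive $\ell$-th root of unity with $\ell>1$ odd, and $d\ge0$. The maps $\varphi(n):S^{d\,(1)_q}(n)\to S^{d\ell}_q(n)$, $\varphi(n)(e^\alpha)=e^{\ell\alpha}$ for $\alpha$ a composition of $d$ into $n$ parts, define an injective natural transformation $\varphi:S^{d\,(1)_q}\to S^{d\ell}_q$ in $\mathcal{P}_q$.
   Context: Quantum polynomial functors: for $q\in\mathbb{K}^\times$, $\mathcal{H}_d$ is the Hecke algebra with generators $T_1,\dots,T_{d-1}$, relations $T_iT_j=T_jT_i$ ($|i-j|>1$), $T_iT_{i+1}T_i=T_{i+1}T_iT_{i+1}$, $(T_i-q)(T_i+q^{-1})=0$. $V_n=\mathbb{K}^n$ with basis $e_1,\dots,e_n$; $T_i$ acts on $V_n^{\otimes d}$ by $R_n$ in positions $i,i+1$, where $R_n(e_i\otimes e_j)=e_j\otimes e_i$ ($i<j$), $q\,e_i\otimes e_i$ ($i=j$), $(q-q^{-1})e_i\otimes e_j+e_j\otimes e_i$ ($i>j$). $\mathcal{P}^d_q$ is the category of $\mathbb{K}$-linear functors from the category with objects $V_n^{\otimes d}$ and $\mathcal{H}_d$-linear maps to finite-dimensional vector spaces, $F(n):=F(V_n^{\otimes d})$; $\mathcal{P}_1$ is the category of strict polynomial functors. $S^*_q(n)$ is the algebra generated by $e_1,\dots,e_n$ in degree 1 with $e_je_i=qe_ie_j$ ($i<j$); its degree-$m$ part defines the quotient functor $S^m_q$ of $I^{\otimes m}$; $e^\alpha=e_1^{\alpha_1}\cdots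 e_n^{\alpha_n}$. $S^d$ is the classical symmetric power in $\mathcal{P}_1$ ($q=1$), with monomial basis $e^\alpha$. Quantum Frobenius twist $F\mapsto F^{(1)_q}$, $\mathcal{P}^d_1\to\mathcal{P}^{d\ell}_q$: precomposition with the functor $V_n^{\otimes d\ell}\mapsto V_n^{\otimes d}$ induced by the Parshall–Wang quantum Frobenius morphism of $q$-Schur algebras, sending the weight idempotent $\xi_\alpha$ (projection onto the $\mathcal{H}_d$-submodule generated by $e_1^{\otimes\alpha_1}\otimes\cdots\otimes e_n^{\otimes\alpha_n}$) to $\xi_\beta$ if $\alpha=\ell\beta$, else $0$; as vector spaces $F^{(1)_q}(n)=F(n)$. *)

theory Defs
  imports Main
begin

text \<open>Basis vectors e_1..e_n of V_n are indexed by 0..n-1.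
  A basis vector of V_n^{tensor D} is indexed by a multi-index J, a list of length D
  with entries < n. A K-linear map f : V_n^{tensor D} -> V_m^{tensor D} is represented by
  its matrix M, where M I J is the coefficient of e_I in f(e_J).\<close>

definition tuples :: "nat \<Rightarrow> nat \<Rightarrow> nat list set" where
  "tuples n D = {J. length J = D \<and> set J \<subseteq> {..<n}}"

definition comps :: "nat \<Rightarrow> nat \<Rightarrow> nat list set" where
  "comps n d = {\<alpha>. length \<alpha> = n \<and> sum_list \<alpha> = d}"

definition swap_at :: "nat \<Rightarrow> nat list \<Rightarrow> nat list" where
  "swap_at i J = J[i := J ! Suc i, Suc i := J ! i]"

text \<open>Coefficient of e_K in T_i(e_J), where T_i acts by R_n in positions i, i+1
  (0-based positions), following the R-matrix of the paper.\<close>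
definition Tcoef :: "'k::field \<Rightarrow> nat \<Rightarrow> nat list \<Rightarrow> nat list \<Rightarrow> 'k" where
  "Tcoef q i K J =
    (let a = J ! i; b = J ! Suc i in
     if a < b then (if K = swap_at i J then 1 else 0)
     else if a = b then (if K = J then q else 0)
     else (if K = J then q - inverse q else 0) + (if K = swap_at i J then 1 else 0))"

text \<open>M is (the matrix of) an H_D-linear map V_n^{tensor D} -> V_m^{tensor D}, i.e. it
  commutes with every generator T_i.\<close>
definition hecke_linear :: "'k::field \<Rightarrow> nat \<Rightarrow> nat \<Rightarrow> nat \<Rightarrow> (nat list \<Rightarrow> nat list \<Rightarrow> 'k) \<Rightarrow> bool" where
  "hecke_linear q n m D M \<longleftrightarrow>
     (\<forall>i. Suc i < D \<longrightarrow> (\<forall>I\<in>tuples m D. \<forall>J\<in>tuples n D.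
        (\<Sum>K\<in>tuples n D. M I K * Tcoef q i K J) = (\<Sum>K\<in>tuples m D. Tcoef q i I K * M K J)))"

definition wt :: "nat \<Rightarrow> nat list \<Rightarrow> nat list" where
  "wt n J = map (\<lambda>i. count_list J i) [0..<n]"

definition sorted_idx :: "nat list \<Rightarrow> nat list" where
  "sorted_idx \<alpha> = concat (map (\<lambda>i. replicate (\<alpha> ! i) i) [0..<length \<alpha>])"

definition inversions :: "nat list \<Rightarrow> nat" where
  "inversions J = card {(a, b). a < b \<and> b < length J \<and> J ! b < J ! a}"

text \<open>Quantum symmetric power S^D_q(n) is represented in its monomial basis e^alpha,
  alpha in comps n D, i.e. vectors are functions nat list => 'k (read on comps n D).
  The quotient map V_n^{tensor D} -> S^D_q(n) sends e_J to q^(inversions J) e^(wt J),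
  since e_j e_i = q e_i e_j for i < j.  The functor S^D_q sends f to the induced map on
  quotients: S^D_q(f)(e^alpha) = pi(f(e_(sorted_idx alpha))).  For q = 1 this is the
  classical symmetric power S^D.\<close>
definition Sq_coef :: "'k::field \<Rightarrow> nat \<Rightarrow> nat \<Rightarrow> (nat list \<Rightarrow> nat list \<Rightarrow> 'k)
    \<Rightarrow> nat list \<Rightarrow> nat list \<Rightarrow> 'k" where
  "Sq_coef q m D M \<beta> \<alpha> =
     (\<Sum>I\<in>{I\<in>tuples m D. wt m I = \<beta>}. q ^ inversions I * M I (sorted_idx \<alpha>))"

definition Sq_map :: "'k::field \<Rightarrow> nat \<Rightarrow> nat \<Rightarrow> nat \<Rightarrow> (nat list \<Rightarrow> nat list \<Rightarrow> 'k)
    \<Rightarrow> (nat list \<Rightarrow> 'k) \<Rightarrow> (nat list \<Rightarrow> 'k)" where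
  "Sq_map q n m D M x = (\<lambda>\<beta>. \<Sum>\<alpha>\<in>comps n D. Sq_coef q m D M \<beta> \<alpha> * x \<alpha>)"

text \<open>Quantum Frobenius on morphisms (Parshall--Wang, dual to x_ij |-> x_ij^l on quantum
  matrix coordinate algebras): the matrix entry at (I, J) of Fr(f) is the entry of f at
  the multi-indices obtained by repeating every letter l times.\<close>
definition stretch :: "nat \<Rightarrow> nat list \<Rightarrow> nat list" where
  "stretch l J = concat (map (replicate l) J)"

definition frob :: "nat \<Rightarrow> (nat list \<Rightarrow> nat list \<Rightarrow> 'k) \<Rightarrow> (nat list \<Rightarrow> nat list \<Rightarrow> 'k)" where
  "frob l M = (\<lambda>I J. M (stretch l I) (stretch l J))"

text \<open>phi(n) : S^{d (1)_q}(n) = S^d(n) -> S^{d l}_q(n), e^alpha |-> e^{l alpha}.\<close>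
definition phi :: "nat \<Rightarrow> nat \<Rightarrow> nat \<Rightarrow> (nat list \<Rightarrow> 'k::field) \<Rightarrow> (nat list \<Rightarrow> 'k)" where
  "phi l n d x = (\<lambda>\<beta>. \<Sum>\<alpha>\<in>comps n d. if \<beta> = map (\<lambda>a. l * a) \<alpha> then x \<alpha> else 0)"

definition primitive_root :: "'k::field \<Rightarrow> nat \<Rightarrow> bool" where
  "primitive_root q l \<longleftrightarrow> q ^ l = 1 \<and> (\<forall>k. 0 < k \<and> k < l \<longrightarrow> q ^ k \<noteq> 1)"

end

theory Submission
  imports Defs "HOL-Library.Multiset"
begin

text \<open>
  Fix a composition \<alpha> of d and let J be the multi-index obtained from the sorted multi-index of
  weight \<alpha> by repeating every letter l times; J is constant on each block of l consecutive
  positions. For a position i inside a block, Hecke-linearity of M with respect to T_i gives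
  M (s_i I) J = q M I J at every ascent i of I, so the summand q^inv(I) M I J of the coefficient
  of S^(dl)_q(M) at (\<beta>, l\<alpha>) gets multiplied by t = q^2 when an ascent inside a block is swapped.
  As l is odd, t is again a primitive l-th root of unity, and then the sum of such a function over
  the words filling one block cancels except on the constant words. This follows from the identity
  sum_B (prod_y [c_y(B)]_t!) g(B) = [N]_t! sum_(B sorted) g(B), where c_y(B) counts the letter y
  in B: the factor [l]_t! vanishes, and the weight prod_y [c_y(B)]_t! vanishes only on constant
  words. Collapsing block by block leaves the sum over stretched words, on which q^inv = 1; what
  remains is the coefficient of S^d(Fr M) at (\<beta>/l, \<alpha>).
\<close>

lemma length_of_tuples: "I \<in> tuples m D \<Longrightarrow> length I = D"
  by (simp add: tuples_def)

lemma finite_tuples [simp]: "finite (tuples m D)"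
  using finite_lists_length_eq[of "{..<m}" D] by (simp add: tuples_def conj_commute)

lemma tuples_0 [simp]: "tuples m 0 = {[]}"
  by (auto simp: tuples_def)

lemma Cons_in_tuples [simp]: "x # B \<in> tuples m (Suc D) \<longleftrightarrow> x < m \<and> B \<in> tuples m D"
  by (auto simp: tuples_def)

lemma tuples_Suc: "tuples m (Suc D) = (\<lambda>(x, B). x # B) ` ({..<m} \<times> tuples m D)"
  by (auto simp: tuples_def length_Suc_conv image_iff)

lemma sum_tuples_Suc:
  "(\<Sum>B\<in>tuples m (Suc D). h B) = (\<Sum>x<m. \<Sum>B\<in>tuples m D. h (x # B))"
  by (simp add: tuples_Suc sum.reindex inj_on_def sum.cartesian_product case_prod_unfold)

lemma sum_tuples_add:
  "(\<Sum>I\<in>tuples m (a + b). h I) = (\<Sum>B\<in>tuples m a. \<Sum>R\<in>tuples m b. h (B @ R))"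
  by (induction a arbitrary: h) (simp_all add: sum_tuples_Suc)

lemma length_swap_at [simp]: "length (swap_at i B) = length B"
  by (simp add: swap_at_def)

lemma swap_at_Cons_Suc [simp]: "swap_at (Suc i) (y # C) = y # swap_at i C"
  by (simp add: swap_at_def)

lemma swap_at_0_Cons [simp]: "swap_at 0 (y # x # C) = x # y # C"
  by (simp add: swap_at_def)

lemma swap_at_append_right: "swap_at (length B + i) (B @ R) = B @ swap_at i R"
  by (simp add: swap_at_def list_update_append nth_append)

lemma swap_at_append_left: "Suc i < length B \<Longrightarrow> swap_at i (B @ R) = swap_at i B @ R"
  by (simp add: swap_at_def list_update_append nth_append)

lemma nth_swap_at:
  assumes "Suc i < length B"
  shows "swap_at i B ! i = B ! Suc i" and "swap_at i B ! Suc i = B ! i"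
  using assms by (simp_all add: swap_at_def)

lemma swap_at_swap_at: "Suc i < length B \<Longrightarrow> swap_at i (swap_at i B) = B"
  by (simp add: swap_at_def list_update_swap)

lemma mset_swap_at [simp]: "Suc i < length B \<Longrightarrow> mset (swap_at i B) = mset B"
  unfolding swap_at_def using mset_swap[of "Suc i" B i] by simp

lemma count_list_swap_at: "Suc i < length B \<Longrightarrow> count_list (swap_at i B) x = count_list B x"
  by (metis count_mset mset_swap_at)

lemma length_filter_swap_at:
  "Suc i < length B \<Longrightarrow> length (filter P (swap_at i B)) = length (filter P B)"
  by (metis mset_filter mset_swap_at size_mset)

lemma swap_at_in_tuples:
  assumes "B \<in> tuples m D" and "Suc i < D"
  shows "swap_at i B \<in> tuples m D"
proof -
  have "mset (swap_at i B) = mset B"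
    using assms by (simp add: length_of_tuples)
  then have "set (swap_at i B) = set B"
    by (metis set_mset_mset)
  with assms show ?thesis by (simp add: tuples_def)
qed

lemma stretch_Nil [simp]: "stretch l [] = []"
  by (simp add: stretch_def)

lemma stretch_Cons [simp]: "stretch l (x # R) = replicate l x @ stretch l R"
  by (simp add: stretch_def)

lemma stretch_append: "stretch l (xs @ ys) = stretch l xs @ stretch l ys"
  by (simp add: stretch_def)

lemma length_stretch [simp]: "length (stretch l R) = l * length R"
  by (induction R) auto

lemma set_stretch: "set (stretch l R) \<subseteq> set R"
  by (induction R) auto

lemma stretch_in_tuples: "R \<in> tuples m d \<Longrightarrow> stretch l R \<in> tuples m (d * l)"
  using set_stretch[of l R] by (auto simp: tuples_def)

lemma stretch_replicate: "stretch l (replicate k i) = replicate (l * k) i"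
  by (induction k) (auto simp: replicate_add[symmetric])

lemma stretch_concat: "stretch l (concat xss) = concat (map (stretch l) xss)"
  by (induction xss) (auto simp: stretch_append)

lemma nth_stretch: "i < l * length R \<Longrightarrow> stretch l R ! i = R ! (i div l)"
proof (induction R arbitrary: i)
  case (Cons x R)
  show ?case
  proof (cases "i < l")
    case False
    with Cons.prems have "i div l = Suc ((i - l) div l)"
      by (cases l) (auto simp: div_if)
    with False Cons show ?thesis by (simp add: nth_append)
  qed (simp add: nth_append)
qed simp

lemma count_list_replicate: "count_list (replicate k y) x = (if y = x then k else 0)"
  by (induction k) auto

lemma count_list_stretch: "count_list (stretch l R) x = l * count_list R x"
  by (induction R) (auto simp: count_list_eq_length_filter)

lemma length_filter_stretch: "length (filter P (stretch l R)) = l * length (filter P R)"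
  by (induction R) auto

lemma wt_stretch: "wt m (stretch l R) = map (\<lambda>a. l * a) (wt m R)"
  by (simp add: wt_def count_list_stretch)

lemma wt_swap_at: "Suc i < length I \<Longrightarrow> wt m (swap_at i I) = wt m I"
  by (simp add: wt_def count_list_swap_at)

lemma inversions_Nil [simp]: "inversions [] = 0"
  by (simp add: inversions_def)

lemma inversions_Cons: "inversions (x # J) = length (filter (\<lambda>y. y < x) J) + inversions J"
proof -
  let ?T = "{(a, b). a < b \<and> b < length J \<and> J ! b < J ! a}"
  have split: "{(a, b). a < b \<and> b < length (x # J) \<and> (x # J) ! b < (x # J) ! a}
      = (\<lambda>b. (0, Suc b)) ` {b. b < length J \<and> J ! b < x} \<union> map_prod Suc Suc ` ?T"
    (is "?S = ?A \<union> ?B")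
  proof (rule set_eqI)
    fix p :: "nat \<times> nat"
    obtain a b where "p = (a, b)" by fastforce
    then show "p \<in> ?S \<longleftrightarrow> p \<in> ?A \<union> ?B" by (cases a; cases b) (auto simp: image_iff)
  qed
  have "finite ?T"
    by (rule finite_subset[of _ "{..<length J} \<times> {..<length J}"]) auto
  then show ?thesis
    unfolding inversions_def split
    by (subst card_Un_disjoint) (auto simp: card_image inj_on_def length_filter_conv_card)
qed

lemma inversions_swap_ascent:
  "Suc i < length I \<Longrightarrow> I ! i < I ! Suc i \<Longrightarrow> inversions (swap_at i I) = Suc (inversions I)"
proof (induction I arbitrary: i)
  case (Cons x I)
  show ?case
  proof (cases i)
    case 0
    with Cons.prems obtain y I' where "I = y # I'" by (cases I) auto
    with Cons.prems 0 show ?thesis by (simp add: inversions_Cons)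
  next
    case (Suc j)
    with Cons.prems Cons.IH[of j] show ?thesis
      by (simp add: inversions_Cons length_filter_swap_at)
  qed
qed simp

lemma inversions_replicate_append:
  "inversions (replicate k x @ S) = k * length (filter (\<lambda>y. y < x) S) + inversions S"
  by (induction k) (auto simp: inversions_Cons)

lemma dvd_inversions_stretch: "l dvd inversions (stretch l R)"
  by (induction R) (auto simp: inversions_replicate_append length_filter_stretch)

section \<open>Twisted symmetric functions of words\<close>

definition ascent_twisted :: "'a::times \<Rightarrow> nat \<Rightarrow> nat \<Rightarrow> (nat list \<Rightarrow> 'a) \<Rightarrow> bool" where
  "ascent_twisted t m N g \<longleftrightarrow>
     (\<forall>B\<in>tuples m N. \<forall>i. Suc i < N \<longrightarrow> B ! i < B ! Suc i \<longrightarrow> g (swap_at i B) = t * g B)"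

lemma ascent_twistedD:
  "ascent_twisted t m N g \<Longrightarrow> B \<in> tuples m N \<Longrightarrow> Suc i < N \<Longrightarrow> B ! i < B ! Suc i
    \<Longrightarrow> g (swap_at i B) = t * g B"
  unfolding ascent_twisted_def by blast

lemma ascent_twisted_Cons:
  assumes "ascent_twisted t m (Suc N) g" and "y < m"
  shows "ascent_twisted t m N (\<lambda>C. g (y # C))"
  unfolding ascent_twisted_def
proof (intro ballI allI impI)
  fix B i assume "B \<in> tuples m N" "Suc i < N" "B ! i < B ! Suc i"
  with assms have "g (swap_at (Suc i) (y # B)) = t * g (y # B)"
    by (intro ascent_twistedD) auto
  then show "g (y # swap_at i B) = t * g (y # B)" by simp
qed

lemma ascent_twisted_mult_invariant:
  fixes t :: "'a::comm_semiring_1"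
  assumes "ascent_twisted t m N g"
    and "\<And>B i. B \<in> tuples m N \<Longrightarrow> Suc i < N \<Longrightarrow> c (swap_at i B) = c B"
  shows "ascent_twisted t m N (\<lambda>B. c B * g B)"
  using assms unfolding ascent_twisted_def by (auto simp: algebra_simps)

lemma ascent_twisted_Cons_insort:
  fixes t :: "'a::comm_semiring_1"
  assumes "sorted B" "B \<in> tuples m N" "x < m" "ascent_twisted t m (Suc N) g"
  shows "g (x # B) = t ^ length (filter (\<lambda>y. y < x) B) * g (insort x B)"
  using assms
proof (induction B arbitrary: N g)
  case (Cons y B)
  obtain N' where N: "N = Suc N'" and y: "y < m" and B: "B \<in> tuples m N'"
    using Cons.prems(2) by (cases N) auto
  show ?case
  proof (cases "x \<le> y")
    case True
    with Cons.prems(1) have "filter (\<lambda>z. z < x) (y # B) = []"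
      by (auto simp: filter_empty_conv)
    with True show ?thesis by simp
  next
    case False
    have "g (swap_at 0 (y # x # B)) = t * g (y # x # B)"
      using Cons.prems(3,4) y B N False by (intro ascent_twistedD[where N = "Suc N"]) auto
    moreover have "g (y # x # B) = t ^ length (filter (\<lambda>z. z < x) B) * g (y # insort x B)"
      using Cons.IH[OF _ B Cons.prems(3) ascent_twisted_Cons] Cons.prems(1,4) y N by simp
    ultimately show ?thesis using False by (simp add: mult.assoc)
  qed
qed simp

definition qint :: "'a::comm_semiring_1 \<Rightarrow> nat \<Rightarrow> 'a" where
  "qint t k = (\<Sum>i<k. t ^ i)"

definition qfact :: "'a::comm_semiring_1 \<Rightarrow> nat \<Rightarrow> 'a" where
  "qfact t k = (\<Prod>i\<in>{1..k}. qint t i)"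

lemma qint_0 [simp]: "qint t 0 = 0"
  by (simp add: qint_def)

lemma qint_add: "qint t (a + b) = qint t a + t ^ a * qint t b"
  by (induction b) (auto simp: qint_def algebra_simps power_add)

lemma qint_geometric: "(t - 1) * qint t k = t ^ k - (1 :: 'a::comm_ring_1)"
  by (induction k) (auto simp: qint_def algebra_simps)

lemma qfact_0 [simp]: "qfact t 0 = 1"
  by (simp add: qfact_def)

lemma qfact_Suc: "qfact t (Suc k) = qfact t k * qint t (Suc k)"
  by (simp add: qfact_def prod.nat_ivl_Suc')

definition qfact_weight :: "'a::comm_semiring_1 \<Rightarrow> nat \<Rightarrow> nat list \<Rightarrow> 'a" where
  "qfact_weight t m B = (\<Prod>y<m. qfact t (count_list B y))"

lemma qfact_weight_Cons:
  "x < m \<Longrightarrow> qfact_weight t m (x # B) = qfact_weight t m B * qint t (Suc (count_list B x))"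
proof -
  assume x: "x < m"
  have "qfact_weight t m (x # B)
      = (\<Prod>y<m. qfact t (count_list B y) * (if y = x then qint t (Suc (count_list B x)) else 1))"
    unfolding qfact_weight_def by (intro prod.cong) (auto simp: qfact_Suc)
  with x show ?thesis
    by (simp add: prod.distrib qfact_weight_def prod.delta)
qed

lemma qfact_weight_swap_at: "Suc i < length B \<Longrightarrow> qfact_weight t m (swap_at i B) = qfact_weight t m B"
  by (simp add: qfact_weight_def count_list_swap_at)

lemma length_filter_less_Suc:
  "length (filter (\<lambda>y. y < Suc k) B) = length (filter (\<lambda>y. y < k) B) + count_list B k"
  by (induction B) auto

lemma sum_qint_count_list:
  fixes B :: "nat list"
  shows "(\<Sum>x<k. qint t (count_list B x) * t ^ length (filter (\<lambda>y. y < x) B))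
     = qint t (length (filter (\<lambda>y. y < k) B))"
  by (induction k) (simp_all add: length_filter_less_Suc qint_add mult.commute)

lemma sum_qint_count_list_bounded:
  fixes B :: "nat list"
  assumes "set B \<subseteq> {..<m}"
  shows "(\<Sum>x<m. qint t (count_list B x) * t ^ length (filter (\<lambda>y. y < x) B)) = qint t (length B)"
proof -
  from assms have "filter (\<lambda>y. y < m) B = B"
    by (auto simp: filter_id_conv)
  then show ?thesis
    using sum_qint_count_list[where k = m and t = t and B = B] by simp
qed

lemma count_list_insort: "count_list (insort x B) y = count_list B y + (if x = y then 1 else 0)"
  by (simp flip: count_mset)

abbreviation sorted_tuples :: "nat \<Rightarrow> nat \<Rightarrow> nat list set" where
  "sorted_tuples m N \<equiv> {B\<in>tuples m N. sorted B}"

lemma bij_betw_insort_sorted_tuples: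
  assumes "x < m"
  shows "bij_betw (insort x) (sorted_tuples m N) {B\<in>sorted_tuples m (Suc N). x \<in> set B}"
proof (rule bij_betw_byWitness[where f' = "remove1 x"])
  show "insort x ` sorted_tuples m N \<subseteq> {B\<in>sorted_tuples m (Suc N). x \<in> set B}"
    using assms by (auto simp: tuples_def sorted_insort set_insort_key length_insort)
  show "remove1 x ` {B\<in>sorted_tuples m (Suc N). x \<in> set B} \<subseteq> sorted_tuples m N"
    using set_remove1_subset by (fastforce simp: tuples_def length_remove1 sorted_remove1)
qed (simp_all add: remove1_insort_key insort_remove1)

lemma sum_sorted_tuples_insort:
  fixes t :: "'a::comm_semiring_1"
  assumes x: "x < m" and g: "ascent_twisted t m (Suc N) g"
  shows "(\<Sum>B\<in>sorted_tuples m N. qint t (Suc (count_list B x)) * g (x # B))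
    = (\<Sum>B\<in>sorted_tuples m (Suc N). qint t (count_list B x) * t ^ length (filter (\<lambda>y. y < x) B) * g B)"
    (is "_ = (\<Sum>B\<in>_. ?c B)")
proof -
  have "(\<Sum>B\<in>sorted_tuples m N. qint t (Suc (count_list B x)) * g (x # B))
      = (\<Sum>B\<in>sorted_tuples m N. ?c (insort x B))"
    by (intro sum.cong refl) (simp add: ascent_twisted_Cons_insort[OF _ _ x g] count_list_insort
        filter_insort_triv mult_ac)
  also have "\<dots> = (\<Sum>B\<in>{B\<in>sorted_tuples m (Suc N). x \<in> set B}. ?c B)"
    by (rule sum.reindex_bij_betw[OF bij_betw_insort_sorted_tuples[OF x]])
  also have "\<dots> = (\<Sum>B\<in>sorted_tuples m (Suc N). ?c B)"
    by (rule sum.mono_neutral_left) auto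
  finally show ?thesis .
qed

text \<open>
  A t-analogue of counting the words of length N with letter multiplicities c_y: counted with
  t^inv, there are [N]_t! / prod_y [c_y]_t! of them.
\<close>
lemma sum_qfact_weight_ascent_twisted:
  fixes t :: "'a::comm_semiring_1"
  assumes "ascent_twisted t m N g"
  shows "(\<Sum>B\<in>tuples m N. qfact_weight t m B * g B) = qfact t N * (\<Sum>B\<in>sorted_tuples m N. g B)"
  using assms
proof (induction N arbitrary: g)
  case 0
  have "sorted_tuples m 0 = {[]}" by auto
  then show ?case by (simp add: qfact_weight_def)
next
  case (Suc N)
  let ?c = "\<lambda>x B. qint t (count_list B x) * t ^ length (filter (\<lambda>y. y < x) B)"
  have first_letter:
    "(\<Sum>B\<in>tuples m N. qfact_weight t m B * (qint t (Suc (count_list B x)) * g (x # B)))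
      = qfact t N * (\<Sum>B\<in>sorted_tuples m (Suc N). ?c x B * g B)" if x: "x < m" for x
  proof -
    have "ascent_twisted t m N (\<lambda>B. qint t (Suc (count_list B x)) * g (x # B))"
      by (rule ascent_twisted_mult_invariant[OF ascent_twisted_Cons[OF Suc.prems x]])
        (simp add: length_of_tuples count_list_swap_at)
    from Suc.IH[OF this] show ?thesis
      by (simp add: sum_sorted_tuples_insort[OF x Suc.prems])
  qed
  have "(\<Sum>B\<in>tuples m (Suc N). qfact_weight t m B * g B)
      = (\<Sum>x<m. \<Sum>B\<in>tuples m N. qfact_weight t m B * (qint t (Suc (count_list B x)) * g (x # B)))"
    by (simp add: sum_tuples_Suc qfact_weight_Cons mult.assoc)
  also have "\<dots> = qfact t N * (\<Sum>B\<in>sorted_tuples m (Suc N). (\<Sum>x<m. ?c x B) * g B)"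
    by (simp add: first_letter sum_distrib_left sum_distrib_right sum.swap[of _ "{..<m}"])
  also have "\<dots> = qfact t N * (\<Sum>B\<in>sorted_tuples m (Suc N). qint t (Suc N) * g B)"
    by (intro arg_cong[where f = "(*) (qfact t N)"] sum.cong refl)
      (simp add: sum_qint_count_list_bounded tuples_def)
  also have "\<dots> = qfact t (Suc N) * (\<Sum>B\<in>sorted_tuples m (Suc N). g B)"
    by (simp add: qfact_Suc sum_distrib_left mult.assoc)
  finally show ?case .
qed

section \<open>Cancellation at a primitive root of unity\<close>

lemma primitive_root_power_eq_1_iff:
  assumes "primitive_root q l" and "0 < l"
  shows "q ^ k = 1 \<longleftrightarrow> l dvd k"
proof
  assume "q ^ k = 1"
  moreover have "q ^ k = (q ^ l) ^ (k div l) * q ^ (k mod l)"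
    unfolding power_mult[symmetric] power_add[symmetric] by simp
  ultimately have "q ^ (k mod l) = 1"
    using assms(1) by (simp add: primitive_root_def)
  with assms have "k mod l = 0"
    unfolding primitive_root_def by (meson mod_less_divisor neq0_conv)
  then show "l dvd k" by (simp add: dvd_eq_mod_eq_0)
next
  assume "l dvd k"
  with assms(1) show "q ^ k = 1"
    by (auto simp: primitive_root_def power_mult elim: dvdE)
qed

lemma primitive_root_square:
  assumes "primitive_root q l" and "odd l"
  shows "primitive_root (q\<^sup>2) l"
proof -
  have "0 < l" using \<open>odd l\<close> by (rule odd_pos)
  have "(q\<^sup>2) ^ k = 1 \<longleftrightarrow> l dvd k" for k
  proof -
    have "coprime l 2" using \<open>odd l\<close> by simp
    then have "l dvd 2 * k \<longleftrightarrow> l dvd k"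
      by (simp add: coprime_dvd_mult_right_iff)
    then show ?thesis
      using primitive_root_power_eq_1_iff[OF assms(1) \<open>0 < l\<close>, of "2 * k"]
      by (simp add: power_mult)
  qed
  then show ?thesis
    by (simp add: primitive_root_def nat_dvd_not_less)
qed

lemma qfact_eq_0_iff:
  fixes t :: "'a::field"
  assumes "primitive_root t l" and "1 < l"
  shows "qfact t k = 0 \<longleftrightarrow> l \<le> k"
proof -
  have "t \<noteq> 1"
    using assms unfolding primitive_root_def by (metis power_one_right zero_less_one)
  then have "qint t i = 0 \<longleftrightarrow> t ^ i = 1" for i
    using qint_geometric[of t i] by (metis mult_eq_0_iff right_minus_eq)
  then have "qfact t k = 0 \<longleftrightarrow> (\<exists>i\<in>{1..k}. l dvd i)"
    using primitive_root_power_eq_1_iff[OF assms(1)] assms(2) by (simp add: qfact_def)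
  also have "\<dots> \<longleftrightarrow> l \<le> k"
    using assms(2) by (auto dest: dvd_imp_le intro: bexI[of _ l])
  finally show ?thesis .
qed

lemma qfact_weight_eq_0_iff:
  fixes t :: "'a::field"
  assumes "primitive_root t l" and "1 < l" and B: "B \<in> tuples m l"
  shows "qfact_weight t m B = 0 \<longleftrightarrow> (\<exists>j<m. B = replicate l j)"
proof
  assume "qfact_weight t m B = 0"
  then obtain j where "j < m" and "l \<le> count_list B j"
    by (auto simp: qfact_weight_def qfact_eq_0_iff[OF assms(1,2)])
  moreover have "length B = l" using B by (rule length_of_tuples)
  ultimately have "count_list B j = length B"
    using count_le_length[of B j] by simp
  then have "\<forall>y\<in>set B. y = j"
    using length_filter_less[of _ B "(=) j"] by (auto simp: count_list_eq_length_filter)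
  then have "B = replicate l j"
    using replicate_length_same[of B j] \<open>length B = l\<close> by simp
  with \<open>j < m\<close> show "\<exists>j<m. B = replicate l j" by blast
next
  assume "\<exists>j<m. B = replicate l j"
  with assms(1,2) show "qfact_weight t m B = 0"
    by (auto simp: qfact_weight_def qfact_eq_0_iff count_list_replicate)
qed

lemma sum_ascent_twisted_primitive_root:
  fixes t :: "'a::field"
  assumes t: "primitive_root t l" and l: "1 < l" and g: "ascent_twisted t m l g"
  shows "(\<Sum>B\<in>tuples m l. g B) = (\<Sum>j<m. g (replicate l j))"
proof -
  let ?w = "qfact_weight t m"
  text \<open>Divide by the weight, which is invariant under swaps (note inverse 0 = 0): since
    [l]_t! = 0, the weighted identity says that g sums to zero over the words of nonzero weight.\<close>
  have "ascent_twisted t m l (\<lambda>B. inverse (?w B) * g B)"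
    by (rule ascent_twisted_mult_invariant[OF g]) (simp add: qfact_weight_swap_at length_of_tuples)
  from sum_qfact_weight_ascent_twisted[OF this]
  have "(\<Sum>B\<in>tuples m l. ?w B * (inverse (?w B) * g B)) = 0"
    using qfact_eq_0_iff[OF t l, of l] by simp
  moreover have "?w B * (inverse (?w B) * g B) = (if ?w B = 0 then 0 else g B)" for B
    by (simp add: mult.assoc[symmetric])
  ultimately have nonconstant_words: "(\<Sum>B\<in>tuples m l. if ?w B = 0 then 0 else g B) = 0"
    by simp
  have "replicate l j \<in> tuples m l" if "j < m" for j
    using that by (auto simp: tuples_def)
  with qfact_weight_eq_0_iff[OF t l]
  have constant_words: "{B\<in>tuples m l. ?w B = 0} = (\<lambda>j. replicate l j) ` {..<m}"
    by blast
  have "(\<Sum>B\<in>tuples m l. g B)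
      = (\<Sum>B\<in>tuples m l. if ?w B = 0 then g B else 0) + (\<Sum>B\<in>tuples m l. if ?w B = 0 then 0 else g B)"
    by (subst sum.distrib[symmetric]) (rule sum.cong; simp)
  also have "\<dots> = (\<Sum>B\<in>{B\<in>tuples m l. ?w B = 0}. g B)"
    using nonconstant_words by (simp add: sum.inter_filter)
  also have "\<dots> = (\<Sum>j<m. g (replicate l j))"
    using l by (simp add: constant_words sum.reindex inj_on_def)
  finally show ?thesis .
qed

text \<open>The condition Suc i mod l \<noteq> 0 says that positions i and i + 1 lie in the same block of
  l consecutive positions.\<close>
definition blockwise_twisted :: "'a::times \<Rightarrow> nat \<Rightarrow> nat \<Rightarrow> nat \<Rightarrow> (nat list \<Rightarrow> 'a) \<Rightarrow> bool" where
  "blockwise_twisted t l m D f \<longleftrightarrow>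
     (\<forall>I\<in>tuples m D. \<forall>i. Suc i < D \<longrightarrow> Suc i mod l \<noteq> 0 \<longrightarrow> I ! i < I ! Suc i
        \<longrightarrow> f (swap_at i I) = t * f I)"

lemma blockwise_twisted_first_block:
  assumes f: "blockwise_twisted t l m (Suc d * l) f" and R: "R \<in> tuples m (d * l)"
  shows "ascent_twisted t m l (\<lambda>B. f (B @ R))"
  unfolding ascent_twisted_def
proof (intro ballI allI impI)
  fix B i assume B: "B \<in> tuples m l" and i: "Suc i < l" and asc: "B ! i < B ! Suc i"
  have "length B = l" using B by (rule length_of_tuples)
  moreover have "B @ R \<in> tuples m (Suc d * l)" using B R by (auto simp: tuples_def)
  ultimately show "f (swap_at i B @ R) = t * f (B @ R)"
    using f i asc unfolding blockwise_twisted_def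
    by (auto simp: swap_at_append_left[symmetric] nth_append)
qed

lemma blockwise_twisted_other_blocks:
  assumes f: "blockwise_twisted t l m (Suc d * l) f" and B: "B \<in> tuples m l"
  shows "blockwise_twisted t l m (d * l) (\<lambda>R. f (B @ R))"
  unfolding blockwise_twisted_def
proof (intro ballI allI impI)
  fix R i assume R: "R \<in> tuples m (d * l)" and i: "Suc i < d * l"
    and md: "Suc i mod l \<noteq> 0" and asc: "R ! i < R ! Suc i"
  have lB: "length B = l" using B by (rule length_of_tuples)
  have "B @ R \<in> tuples m (Suc d * l)" using B R by (auto simp: tuples_def)
  moreover have "Suc (l + i) mod l \<noteq> 0" using md by (metis add_Suc_right mod_add_self1)
  ultimately have "f (swap_at (l + i) (B @ R)) = t * f (B @ R)"
    using f i asc lB unfolding blockwise_twisted_def by (auto simp: nth_append)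
  then show "f (B @ swap_at i R) = t * f (B @ R)"
    using swap_at_append_right[of B i R] lB by simp
qed

lemma sum_blockwise_twisted_eq_sum_stretch:
  fixes t :: "'a::field"
  assumes t: "primitive_root t l" and l: "1 < l" and f: "blockwise_twisted t l m (d * l) f"
  shows "(\<Sum>I\<in>tuples m (d * l). f I) = (\<Sum>I\<in>tuples m d. f (stretch l I))"
  using f
proof (induction d arbitrary: f)
  case (Suc d)
  have "(\<Sum>I\<in>tuples m (Suc d * l). f I) = (\<Sum>B\<in>tuples m l. \<Sum>R\<in>tuples m (d * l). f (B @ R))"
    using sum_tuples_add[of f m l "d * l"] by simp
  also have "\<dots> = (\<Sum>R\<in>tuples m d. \<Sum>B\<in>tuples m l. f (B @ stretch l R))"
    using Suc.IH[OF blockwise_twisted_other_blocks[OF Suc.prems]]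
    by (simp add: sum.swap[of _ "tuples m l"])
  also have "\<dots> = (\<Sum>R\<in>tuples m d. \<Sum>j<m. f (replicate l j @ stretch l R))"
    using sum_ascent_twisted_primitive_root[OF t l
        blockwise_twisted_first_block[OF Suc.prems stretch_in_tuples]]
    by simp
  also have "\<dots> = (\<Sum>I\<in>tuples m (Suc d). f (stretch l I))"
    by (simp add: sum_tuples_Suc sum.swap[of _ "{..<m}"])
  finally show ?case .
qed simp

section \<open>Hecke-linear maps\<close>

lemma Tcoef_equal: "J ! i = J ! Suc i \<Longrightarrow> Tcoef q i K J = (if K = J then q else 0)"
  by (simp add: Tcoef_def Let_def)

lemma Tcoef_ascent:
  assumes "Suc i < length I" "length K = length I" "I ! i < I ! Suc i"
  shows "Tcoef q i I K = (if K = swap_at i I then 1 else 0)"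
proof (cases "K = swap_at i I")
  case True
  from assms have "swap_at i I \<noteq> I"
    by (metis nth_swap_at(1) less_irrefl)
  with True assms show ?thesis by (simp add: Tcoef_def Let_def nth_swap_at swap_at_swap_at)
next
  case False
  with assms have "I \<noteq> swap_at i K" by (metis length_swap_at swap_at_swap_at)
  with False assms show ?thesis by (auto simp: Tcoef_def Let_def)
qed

lemma hecke_linear_swap_ascent:
  assumes H: "hecke_linear q n m D M" and i: "Suc i < D"
    and I: "I \<in> tuples m D" and J: "J \<in> tuples n D"
    and eq: "J ! i = J ! Suc i" and asc: "I ! i < I ! Suc i"
  shows "M (swap_at i I) J = q * M I J"
proof -
  have "(\<Sum>K\<in>tuples n D. M I K * Tcoef q i K J) = M I J * q"
    using J by (simp add: Tcoef_equal[OF eq] if_distrib cong: if_cong)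
  moreover have "(\<Sum>K\<in>tuples m D. Tcoef q i I K * M K J)
      = (\<Sum>K\<in>tuples m D. if K = swap_at i I then M K J else 0)"
    using I i asc by (intro sum.cong refl) (simp add: Tcoef_ascent length_of_tuples)
  ultimately show ?thesis
    using H i I J swap_at_in_tuples[OF I i] unfolding hecke_linear_def by (simp add: mult.commute)
qed

section \<open>The Frobenius map on quantum symmetric powers\<close>

lemma finite_comps [simp]: "finite (comps n d)"
proof (rule finite_subset)
  show "comps n d \<subseteq> {xs. set xs \<subseteq> {..d} \<and> length xs = n}"
    by (auto simp: comps_def member_le_sum_list)
qed (rule finite_lists_length_eq, simp)

lemma wt_in_comps: "I \<in> tuples m d \<Longrightarrow> wt m I \<in> comps m d"
  by (simp add: wt_def comps_def tuples_def sum_list_distinct_conv_sum_set atLeast0LessThan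
      sum_count_set)

lemma map_mult_in_comps: "\<alpha> \<in> comps n d \<Longrightarrow> map (\<lambda>a. l * a) \<alpha> \<in> comps n (d * l)"
  by (auto simp: comps_def sum_list_const_mult)

lemma sorted_idx_in_tuples: "\<alpha> \<in> comps n d \<Longrightarrow> sorted_idx \<alpha> \<in> tuples n d"
  by (auto simp: comps_def tuples_def sorted_idx_def length_concat comp_def map_nth)

lemma stretch_sorted_idx: "stretch l (sorted_idx \<alpha>) = sorted_idx (map (\<lambda>a. l * a) \<alpha>)"
  unfolding sorted_idx_def stretch_concat
  by (auto simp: stretch_replicate intro!: arg_cong[where f = concat] map_cong)

lemma power_inversions_stretch: "primitive_root q l \<Longrightarrow> q ^ inversions (stretch l I) = 1"
  using dvd_inversions_stretch[of l I] by (auto simp: primitive_root_def power_mult elim: dvdE)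

lemma nth_stretch_within_block:
  assumes "Suc i < l * length R" and "Suc i mod l \<noteq> 0"
  shows "stretch l R ! i = stretch l R ! Suc i"
proof -
  have "Suc i div l = i div l" using assms(2) by (simp add: div_Suc)
  with assms(1) show ?thesis by (simp add: nth_stretch)
qed

lemma Sq_coef_stretch:
  fixes q :: "'k::field"
  assumes q: "primitive_root q l" and "odd l" and l: "1 < l"
    and H: "hecke_linear q n m (d * l) M" and \<alpha>: "\<alpha> \<in> comps n d"
  shows "Sq_coef q m (d * l) M \<beta> (map (\<lambda>a. l * a) \<alpha>)
       = (\<Sum>I\<in>tuples m d. if map (\<lambda>a. l * a) (wt m I) = \<beta>
                          then M (stretch l I) (stretch l (sorted_idx \<alpha>)) else 0)"
proof -
  let ?J = "stretch l (sorted_idx \<alpha>)"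
  have S: "sorted_idx \<alpha> \<in> tuples n d" using \<alpha> by (rule sorted_idx_in_tuples)
  then have J: "?J \<in> tuples n (d * l)" by (rule stretch_in_tuples)
  define f where "f I = (if wt m I = \<beta> then q ^ inversions I * M I ?J else 0)" for I
  have "blockwise_twisted (q\<^sup>2) l m (d * l) f"
    unfolding blockwise_twisted_def
  proof (intro ballI allI impI)
    fix I i assume I: "I \<in> tuples m (d * l)" and i: "Suc i < d * l"
      and md: "Suc i mod l \<noteq> 0" and asc: "I ! i < I ! Suc i"
    have "M (swap_at i I) ?J = q * M I ?J"
      using hecke_linear_swap_ascent[OF H i I J _ asc] nth_stretch_within_block[of i l] md i
        length_of_tuples[OF S] by (simp add: mult.commute)
    then show "f (swap_at i I) = q\<^sup>2 * f I"
      using i asc length_of_tuples[OF I]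
      by (simp add: f_def wt_swap_at inversions_swap_ascent power2_eq_square)
  qed
  then have "(\<Sum>I\<in>tuples m (d * l). f I) = (\<Sum>I\<in>tuples m d. f (stretch l I))"
    by (rule sum_blockwise_twisted_eq_sum_stretch[OF primitive_root_square[OF q \<open>odd l\<close>] l])
  moreover have "Sq_coef q m (d * l) M \<beta> (map (\<lambda>a. l * a) \<alpha>) = (\<Sum>I\<in>tuples m (d * l). f I)"
    by (simp add: Sq_coef_def f_def stretch_sorted_idx[symmetric] sum.inter_filter)
  moreover have "f (stretch l I) = (if map (\<lambda>a. l * a) (wt m I) = \<beta> then M (stretch l I) ?J else 0)"
    for I by (simp add: f_def wt_stretch power_inversions_stretch[OF q])
  ultimately show ?thesis
    by simp
qed

lemma phi_Sq_map_frob: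
  "phi l m d (Sq_map 1 n m d (frob l M) x) \<beta> =
     (\<Sum>\<alpha>\<in>comps n d. x \<alpha> * (\<Sum>I\<in>tuples m d. if map (\<lambda>a. l * a) (wt m I) = \<beta>
                                          then M (stretch l I) (stretch l (sorted_idx \<alpha>)) else 0))"
proof -
  let ?h = "\<lambda>\<alpha> I. M (stretch l I) (stretch l (sorted_idx \<alpha>))"
  let ?G = "\<lambda>\<alpha>' \<alpha>. \<Sum>I\<in>{I\<in>tuples m d. wt m I = \<alpha>'}.
              if map (\<lambda>a. l * a) (wt m I) = \<beta> then ?h \<alpha> I else 0"
  have "(if \<beta> = map (\<lambda>a. l * a) \<alpha>' then Sq_map 1 n m d (frob l M) x \<alpha>' else 0)
      = (\<Sum>\<alpha>\<in>comps n d. x \<alpha> * ?G \<alpha>' \<alpha>)" for \<alpha>'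
    by (auto simp: Sq_map_def Sq_coef_def frob_def mult.commute intro!: sum.cong)
  then have "phi l m d (Sq_map 1 n m d (frob l M) x) \<beta>
      = (\<Sum>\<alpha>\<in>comps n d. x \<alpha> * (\<Sum>\<alpha>'\<in>comps m d. ?G \<alpha>' \<alpha>))"
    by (simp add: phi_def sum_distrib_left sum.swap[of _ "comps m d"])
  moreover have "(\<Sum>\<alpha>'\<in>comps m d. ?G \<alpha>' \<alpha>)
      = (\<Sum>I\<in>tuples m d. if map (\<lambda>a. l * a) (wt m I) = \<beta> then ?h \<alpha> I else 0)" for \<alpha>
    by (rule sum.group) (auto simp: wt_in_comps)
  ultimately show ?thesis by simp
qed

lemma Sq_map_phi:
  "Sq_map q n m (d * l) M (phi l n d x) \<beta>
     = (\<Sum>\<alpha>\<in>comps n d. x \<alpha> * Sq_coef q m (d * l) M \<beta> (map (\<lambda>a. l * a) \<alpha>))"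
proof -
  have "Sq_map q n m (d * l) M (phi l n d x) \<beta>
      = (\<Sum>\<gamma>\<in>comps n (d * l). \<Sum>\<alpha>\<in>comps n d.
           if \<gamma> = map (\<lambda>a. l * a) \<alpha> then x \<alpha> * Sq_coef q m (d * l) M \<beta> \<gamma> else 0)"
    unfolding Sq_map_def phi_def sum_distrib_left by (intro sum.cong refl) (simp add: mult.commute)
  also have "\<dots> = (\<Sum>\<alpha>\<in>comps n d. \<Sum>\<gamma>\<in>comps n (d * l).
           if \<gamma> = map (\<lambda>a. l * a) \<alpha> then x \<alpha> * Sq_coef q m (d * l) M \<beta> \<gamma> else 0)"
    by (rule sum.swap)
  also have "\<dots> = (\<Sum>\<alpha>\<in>comps n d. x \<alpha> * Sq_coef q m (d * l) M \<beta> (map (\<lambda>a. l * a) \<alpha>))"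
    by (intro sum.cong refl) (simp add: sum.delta map_mult_in_comps)
  finally show ?thesis .
qed

lemma phi_natural:
  fixes q :: "'k::field"
  assumes "primitive_root q l" and "odd l" and "1 < l" and "hecke_linear q n m (d * l) M"
  shows "phi l m d (Sq_map 1 n m d (frob l M) x) = Sq_map q n m (d * l) M (phi l n d x)"
  by (rule ext) (simp add: phi_Sq_map_frob Sq_map_phi Sq_coef_stretch[OF assms] cong: sum.cong)

lemma phi_map_mult:
  assumes "0 < l" and "\<alpha> \<in> comps n d"
  shows "phi l n d x (map (\<lambda>a. l * a) \<alpha>) = x \<alpha>"
proof -
  have "inj (\<lambda>a::nat. l * a)" using assms(1) by (simp add: inj_on_def)
  then have "phi l n d x (map (\<lambda>a. l * a) \<alpha>) = (\<Sum>\<alpha>'\<in>comps n d. if \<alpha> = \<alpha>' then x \<alpha>' else 0)"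
    unfolding phi_def by (simp add: inj_map_eq_map)
  with assms(2) show ?thesis by simp
qed

lemma inj_on_phi:
  assumes "0 < l"
  shows "inj_on (phi l n d) {x. \<forall>\<alpha>. \<alpha> \<notin> comps n d \<longrightarrow> x \<alpha> = 0}"
proof (rule inj_onI, rule ext)
  fix x y :: "nat list \<Rightarrow> 'k::field" and \<alpha>
  assume x: "x \<in> {x. \<forall>\<alpha>. \<alpha> \<notin> comps n d \<longrightarrow> x \<alpha> = 0}"
    and y: "y \<in> {x. \<forall>\<alpha>. \<alpha> \<notin> comps n d \<longrightarrow> x \<alpha> = 0}"
    and eq: "phi l n d x = phi l n d y"
  show "x \<alpha> = y \<alpha>"
  proof (cases "\<alpha> \<in> comps n d")
    case True
    then show ?thesis
      using fun_cong[OF eq, of "map (\<lambda>a. l * a) \<alpha>"] by (simp add: phi_map_mult[OF assms])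
  next
    case False
    with x y show ?thesis by simp
  qed
qed

theorem proposition4p2:
  fixes q :: "'k::field" and l d :: nat
  assumes "primitive_root q l" and "l > 1" and "odd l"
  shows "(\<forall>n m M. hecke_linear q n m (d * l) M \<longrightarrow>
            (\<forall>x. phi l m d (Sq_map 1 n m d (frob l M) x) =
                 Sq_map q n m (d * l) M (phi l n d x)))
       \<and> (\<forall>n. inj_on (phi l n d :: (nat list \<Rightarrow> 'k) \<Rightarrow> _) {x. \<forall>\<alpha>. \<alpha> \<notin> comps n d \<longrightarrow> x \<alpha> = 0})"
  using phi_natural[OF assms(1,3,2)] inj_on_phi[of l] assms(2) by auto

end
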